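(* Let $R$ be a commutative unital ring, $A$ a unital associative $R$-algebra and $M$ an $(A,A)$-bimodule. Then there are isomorphisms of cochain complexes of $R$-modules \[(C^*_\mu({\tt I}_n;A,M),d)\cong(\widehat C^*_{\rm Chrom}({\tt I}_n;A,M),\widehat{\tt d})\cong(C^*_{\rm Chrom}({\tt I}_n;A,M),{\tt d})\] and \[(C^*_\mu({\tt P}_n;A,M),d)\oplus(M[n+1],0)\cong(\widehat C^*_{\rm Chrom}({\tt P}_n;A,M),\widehat{\tt d}),\] where $(M[n+1],0)$ is the complex consisting of a single copy of $M$ in degree $n+1$.
   Context: ${\tt I}_n$ is the digraph with vertices $v_0,\dots,v_n$ and edges $(v_{i-1},v_i)$, $1\le i\le n$; ${\tt P}_n$ has vertices $v_0,\dots,v_n$ and edges $(v_i,v_{i+1})$, $0\le i<n$, and $(v_n,v_0)$. For ${\tt G}\in\{{\tt I}_n,{\tt P}_n\}$ and a spanning subgraph ${\tt H}$ (all vertices, subset of edges) with connected components $c_0<\dots<c_k$ ordered by minimal vertex (so $v_0\in c_0$), set $\mathcal F({\tt H})=M\otimes_R A^{\otimes_R k}$. For ${\tt H}\prec{\tt H}'={\tt H}\cup e$ (adding one edge): if $e$ joins distinct components $c_s\ni s(e)$ and $c_t\ni t(e)$, the map replaces the factors $a_s,a_t$ by $a_s\cdot a_t$ at position $\min(s,t)$ (the position of the merged component), other factors unchanged; if both endpoints of $e$ lie in one component (only possible when ${\tt H}'={\tt P}_n$), the map ${\tt d}_{{\tt H}\prec{\tt H}'}$ is the identity $M\to M$ while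 $\widehat{\tt d}_{{\tt H}\prec{\tt H}'}$ is zero. With a fixed edge order and $\zeta({\tt H},{\tt H}\cup e)$ = number of edges of ${\tt H}$ preceding $e$ mod 2: $C^i_{\rm Chrom}=\widehat C^i_{\rm Chrom}=\bigoplus_{\#E({\tt H})=i}\mathcal F({\tt H})$ over all spanning subgraphs, with differentials ${\tt d}=\sum(-1)^\zeta{\tt d}_{{\tt H}\prec{\tt H}'}$ and $\widehat{\tt d}=\sum(-1)^\zeta\widehat{\tt d}_{{\tt H}\prec{\tt H}'}$ (chromatic complexes of Helme-Guizon–Rong and Przytycki, in their orientation-dependent form). The multipath complex $C^i_\mu({\tt G};A,M)$ is the sum of $\mathcal F({\tt H})$ over multipaths ${\tt H}$ (spanning subgraphs whose components are isolated vertices or simple directed paths; for ${\tt I}_n$ all spanning subgraphs, for ${\tt P}_n$ all except ${\tt P}_n$) with $i$ edges and the same covering maps and signs (any sign assignment gives an isomorphic complex). *)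

theory Defs
  imports Main "HOL-Library.Poly_Mapping"
begin

text \<open>R is a type of class comm_ring_1. A unital associative R-algebra is a ring_1 type 'a
together with a ring homomorphism alg from R into the centre of A (scalar action r.a = alg r * a).\<close>

definition r_algebra :: "('r::comm_ring_1 \<Rightarrow> 'a::ring_1) \<Rightarrow> bool" where
  "r_algebra alg \<longleftrightarrow> alg 1 = 1 \<and> (\<forall>r s. alg (r + s) = alg r + alg s) \<and>
     (\<forall>r s. alg (r * s) = alg r * alg s) \<and> (\<forall>r a. alg r * a = a * alg r)"

definition bimodule :: "('r::comm_ring_1 \<Rightarrow> 'a::ring_1) \<Rightarrow> ('a \<Rightarrow> 'm::ab_group_add \<Rightarrow> 'm)
     \<Rightarrow> ('m \<Rightarrow> 'a \<Rightarrow> 'm) \<Rightarrow> bool" where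
  "bimodule alg lm rm \<longleftrightarrow>
     (\<forall>m. lm 1 m = m) \<and> (\<forall>a b m. lm (a * b) m = lm a (lm b m)) \<and>
     (\<forall>a b m. lm (a + b) m = lm a m + lm b m) \<and> (\<forall>a m m'. lm a (m + m') = lm a m + lm a m') \<and>
     (\<forall>m. rm m 1 = m) \<and> (\<forall>a b m. rm m (a * b) = rm (rm m a) b) \<and>
     (\<forall>a b m. rm m (a + b) = rm m a + rm m b) \<and> (\<forall>a m m'. rm (m + m') a = rm m a + rm m' a) \<and>
     (\<forall>a b m. rm (lm a m) b = lm a (rm m b)) \<and>
     (\<forall>r m. lm (alg r) m = rm m (alg r))"

text \<open>Free R-module on the pairs (m, [a_1,...,a_k]); the tensor product
M \<otimes>_R A^{\<otimes>k} is the quotient of the span of the generators with list length k by the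
submodule spanned by the multilinearity relations. We take one relation submodule for all
lengths at once (it is graded by length), so the quotient over all lengths is the direct sum
over k of the tensor products, and M \<otimes> A^{\<otimes>k} is the image of the length-k part.\<close>

type_synonym ('m, 'a, 'r) free = "('m \<times> 'a list) \<Rightarrow>\<^sub>0 'r"

definition fsmult :: "'r::comm_ring_1 \<Rightarrow> ('m, 'a, 'r) free \<Rightarrow> ('m, 'a, 'r) free" where
  "fsmult r f = Poly_Mapping.map (\<lambda>c. r * c) f"

definition gen :: "'m \<Rightarrow> 'a list \<Rightarrow> ('m, 'a, 'r::comm_ring_1) free" where
  "gen m as = Poly_Mapping.single (m, as) 1"

definition tensor_relations ::
  "('r::comm_ring_1 \<Rightarrow> 'a::ring_1) \<Rightarrow> ('a \<Rightarrow> 'm::ab_group_add \<Rightarrow> 'm) \<Rightarrow> ('m, 'a, 'r) free set" where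
  "tensor_relations alg lm =
     {gen (m1 + m2) as - gen m1 as - gen m2 as | m1 m2 as. True} \<union>
     {gen m (as[i := a + b]) - gen m (as[i := a]) - gen m (as[i := b]) | m as i a b. i < length as} \<union>
     {gen (lm (alg r) m) as - fsmult r (gen m as) | r m as. True} \<union>
     {gen m (as[i := alg r * as ! i]) - fsmult r (gen m as) | r m as i. i < length as}"

inductive_set rspan :: "('m, 'a, 'r::comm_ring_1) free set \<Rightarrow> ('m, 'a, 'r) free set"
  for G where
    rspan_zero: "0 \<in> rspan G"
  | rspan_gen: "g \<in> G \<Longrightarrow> g \<in> rspan G"
  | rspan_add: "x \<in> rspan G \<Longrightarrow> y \<in> rspan G \<Longrightarrow> x + y \<in> rspan G"
  | rspan_smult: "x \<in> rspan G \<Longrightarrow> fsmult r x \<in> rspan G"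

definition tensor_N :: "('r::comm_ring_1 \<Rightarrow> 'a::ring_1) \<Rightarrow> ('a \<Rightarrow> 'm::ab_group_add \<Rightarrow> 'm)
    \<Rightarrow> ('m, 'a, 'r) free set" where
  "tensor_N alg lm = rspan (tensor_relations alg lm)"

definition tq :: "('r::comm_ring_1 \<Rightarrow> 'a::ring_1) \<Rightarrow> ('a \<Rightarrow> 'm::ab_group_add \<Rightarrow> 'm)
    \<Rightarrow> ('m, 'a, 'r) free \<Rightarrow> ('m, 'a, 'r) free set" where
  "tq alg lm f = (\<lambda>n. f + n) ` tensor_N alg lm"

definition free_len :: "nat \<Rightarrow> ('m, 'a, 'r::comm_ring_1) free set" where
  "free_len k = {f. \<forall>y \<in> Poly_Mapping.keys f. length (snd y) = k}"

definition tensor_carrier :: "('r::comm_ring_1 \<Rightarrow> 'a::ring_1) \<Rightarrow> ('a \<Rightarrow> 'm::ab_group_add \<Rightarrow> 'm)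
    \<Rightarrow> nat \<Rightarrow> ('m, 'a, 'r) free set set" where
  "tensor_carrier alg lm k = tq alg lm ` free_len k"

definition rep :: "'x set \<Rightarrow> 'x" where
  "rep X = (SOME x. x \<in> X)"

definition lin_ext :: "('m \<times> 'a list \<Rightarrow> 'n \<times> 'b list) \<Rightarrow> ('m, 'a, 'r::comm_ring_1) free
    \<Rightarrow> ('n, 'b, 'r) free" where
  "lin_ext g f = (\<Sum>y \<in> Poly_Mapping.keys f. Poly_Mapping.single (g y) (Poly_Mapping.lookup f y))"

definition remove_nth :: "nat \<Rightarrow> 'a list \<Rightarrow> 'a list" where
  "remove_nth j xs = take j xs @ drop (Suc j) xs"

text \<open>Merging the factors at positions s (component of the source) and t (component of the
target) with s \<noteq> t; position 0 is the M-factor, position i \<ge> 1 is the list entry i-1.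
The result a_s * a_t is placed at position min s t.\<close>
definition merge :: "('a::ring_1 \<Rightarrow> 'm \<Rightarrow> 'm) \<Rightarrow> ('m \<Rightarrow> 'a \<Rightarrow> 'm) \<Rightarrow> nat \<Rightarrow> nat
    \<Rightarrow> 'm \<times> 'a list \<Rightarrow> 'm \<times> 'a list" where
  "merge lm rm s t x = (case x of (m, as) \<Rightarrow>
     if s = 0 then (rm m (as ! (t - 1)), remove_nth (t - 1) as)
     else if t = 0 then (lm (as ! (s - 1)) m, remove_nth (s - 1) as)
     else (m, remove_nth (max s t - 1) (as[min s t - 1 := as ! (s - 1) * as ! (t - 1)])))"

text \<open>A digraph on vertices 0..nv with edges indexed 0..<ne (this indexing is the fixed edge
order), edge j going from src j to tgt j. A spanning subgraph is a set of edge indices.\<close>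

definition conn :: "(nat \<Rightarrow> nat) \<Rightarrow> (nat \<Rightarrow> nat) \<Rightarrow> nat set \<Rightarrow> nat \<Rightarrow> nat \<Rightarrow> bool" where
  "conn src tgt H u v \<longleftrightarrow> (u, v) \<in> (\<Union>j\<in>H. {(src j, tgt j), (tgt j, src j)})\<^sup>*"

definition comp :: "nat \<Rightarrow> (nat \<Rightarrow> nat) \<Rightarrow> (nat \<Rightarrow> nat) \<Rightarrow> nat set \<Rightarrow> nat \<Rightarrow> nat set" where
  "comp nv src tgt H v = {u \<in> {0..nv}. conn src tgt H u v}"

definition cmin :: "nat \<Rightarrow> (nat \<Rightarrow> nat) \<Rightarrow> (nat \<Rightarrow> nat) \<Rightarrow> nat set \<Rightarrow> nat \<Rightarrow> nat" where
  "cmin nv src tgt H v = Min (comp nv src tgt H v)"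

text \<open>index of the component containing v, components ordered by minimal vertex\<close>
definition crank :: "nat \<Rightarrow> (nat \<Rightarrow> nat) \<Rightarrow> (nat \<Rightarrow> nat) \<Rightarrow> nat set \<Rightarrow> nat \<Rightarrow> nat" where
  "crank nv src tgt H v =
     card {w \<in> {0..nv}. cmin nv src tgt H w = w \<and> w < cmin nv src tgt H v}"

text \<open>k(H) = number of components minus one\<close>
definition kH :: "nat \<Rightarrow> (nat \<Rightarrow> nat) \<Rightarrow> (nat \<Rightarrow> nat) \<Rightarrow> nat set \<Rightarrow> nat" where
  "kH nv src tgt H = card {w \<in> {0..nv}. cmin nv src tgt H w = w} - 1"

text \<open>Multipath: every connected component is a simple directed path v_0 \<rightarrow> ... \<rightarrow> v_l
(l = 0: an isolated vertex).\<close>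
definition is_multipath :: "nat \<Rightarrow> (nat \<Rightarrow> nat) \<Rightarrow> (nat \<Rightarrow> nat) \<Rightarrow> nat set \<Rightarrow> bool" where
  "is_multipath nv src tgt H \<longleftrightarrow>
     (\<forall>v \<in> {0..nv}. \<exists>vs. distinct vs \<and> set vs = comp nv src tgt H v \<and>
        (\<forall>i. Suc i < length vs \<longrightarrow> (\<exists>j\<in>H. src j = vs ! i \<and> tgt j = vs ! Suc i)) \<and>
        (\<forall>j\<in>H. src j \<in> comp nv src tgt H v \<longrightarrow>
            (\<exists>i. Suc i < length vs \<and> src j = vs ! i \<and> tgt j = vs ! Suc i)) \<and>
        (\<forall>j1\<in>H. \<forall>j2\<in>H. src j1 = src j2 \<and> tgt j1 = tgt j2 \<longrightarrow> j1 = j2))"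

definition I_src :: "nat \<Rightarrow> nat" where "I_src j = j"
definition I_tgt :: "nat \<Rightarrow> nat" where "I_tgt j = Suc j"
definition P_src :: "nat \<Rightarrow> nat \<Rightarrow> nat" where "P_src n j = j"
definition P_tgt :: "nat \<Rightarrow> nat \<Rightarrow> nat" where "P_tgt n j = Suc j mod Suc n"

record ('r, 'x) cochain_cx =
  cx_carrier :: "nat \<Rightarrow> 'x set"
  cx_add :: "nat \<Rightarrow> 'x \<Rightarrow> 'x \<Rightarrow> 'x"
  cx_smult :: "nat \<Rightarrow> 'r \<Rightarrow> 'x \<Rightarrow> 'x"
  cx_d :: "nat \<Rightarrow> 'x \<Rightarrow> 'x"

definition cx_iso :: "('r, 'x) cochain_cx \<Rightarrow> ('r, 'y) cochain_cx \<Rightarrow> bool" where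
  "cx_iso C D \<longleftrightarrow> (\<exists>f :: nat \<Rightarrow> 'x \<Rightarrow> 'y. \<forall>i.
     bij_betw (f i) (cx_carrier C i) (cx_carrier D i) \<and>
     (\<forall>x\<in>cx_carrier C i. \<forall>y\<in>cx_carrier C i.
         f i (cx_add C i x y) = cx_add D i (f i x) (f i y)) \<and>
     (\<forall>r. \<forall>x\<in>cx_carrier C i. f i (cx_smult C i r x) = cx_smult D i r (f i x)) \<and>
     (\<forall>x\<in>cx_carrier C i. f (Suc i) (cx_d C i x) = cx_d D i (f i x)))"

definition cx_dsum :: "('r, 'x) cochain_cx \<Rightarrow> ('r, 'y) cochain_cx \<Rightarrow> ('r, 'x \<times> 'y) cochain_cx" where
  "cx_dsum C D = \<lparr>cx_carrier = (\<lambda>i. cx_carrier C i \<times> cx_carrier D i),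
     cx_add = (\<lambda>i x y. (cx_add C i (fst x) (fst y), cx_add D i (snd x) (snd y))),
     cx_smult = (\<lambda>i r x. (cx_smult C i r (fst x), cx_smult D i r (snd x))),
     cx_d = (\<lambda>i x. (cx_d C i (fst x), cx_d D i (snd x)))\<rparr>"

definition shifted_M :: "('r::comm_ring_1 \<Rightarrow> 'a::ring_1) \<Rightarrow> ('a \<Rightarrow> 'm::ab_group_add \<Rightarrow> 'm)
    \<Rightarrow> nat \<Rightarrow> ('r, 'm) cochain_cx" where
  "shifted_M alg lm d = \<lparr>cx_carrier = (\<lambda>i. if i = d then UNIV else {0}),
     cx_add = (\<lambda>i x y. x + y), cx_smult = (\<lambda>i r x. lm (alg r) x), cx_d = (\<lambda>i x. 0)\<rparr>"

definition subgraphs :: "nat \<Rightarrow> (nat set \<Rightarrow> bool) \<Rightarrow> nat \<Rightarrow> nat set set" where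
  "subgraphs ne P i = {H. H \<subseteq> {0..<ne} \<and> card H = i \<and> P H}"

text \<open>summand of d from F(H) to F(H \<union> {e}), applied to a representative; hat selects whether
the map is zero (hat) or the identity (not hat) when e joins a component to itself\<close>
definition cover_map :: "('a::ring_1 \<Rightarrow> 'm \<Rightarrow> 'm) \<Rightarrow> ('m \<Rightarrow> 'a \<Rightarrow> 'm) \<Rightarrow> bool \<Rightarrow> nat
    \<Rightarrow> (nat \<Rightarrow> nat) \<Rightarrow> (nat \<Rightarrow> nat) \<Rightarrow> nat set \<Rightarrow> nat \<Rightarrow> ('m, 'a, 'r::comm_ring_1) free
    \<Rightarrow> ('m, 'a, 'r) free" where
  "cover_map lm rm hat nv src tgt H e f =
     (let s = crank nv src tgt H (src e); t = crank nv src tgt H (tgt e) in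
      if s \<noteq> t then lin_ext (merge lm rm s t) f else if hat then 0 else f)"

text \<open>The complex \<Oplus>_{H with i edges, P H} F(H); an element is a function from subgraphs to
elements of the tensor products (and {} outside the index set).\<close>
definition graph_cx :: "('r::comm_ring_1 \<Rightarrow> 'a::ring_1) \<Rightarrow> ('a \<Rightarrow> 'm::ab_group_add \<Rightarrow> 'm)
    \<Rightarrow> ('m \<Rightarrow> 'a \<Rightarrow> 'm) \<Rightarrow> bool \<Rightarrow> nat \<Rightarrow> nat \<Rightarrow> (nat \<Rightarrow> nat) \<Rightarrow> (nat \<Rightarrow> nat)
    \<Rightarrow> (nat set \<Rightarrow> bool) \<Rightarrow> ('r, nat set \<Rightarrow> ('m, 'a, 'r) free set) cochain_cx" where
  "graph_cx alg lm rm hat nv ne src tgt P = \<lparr>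
     cx_carrier = (\<lambda>i. {x. \<forall>H. (H \<in> subgraphs ne P i \<longrightarrow>
                                   x H \<in> tensor_carrier alg lm (kH nv src tgt H)) \<and>
                               (H \<notin> subgraphs ne P i \<longrightarrow> x H = {})}),
     cx_add = (\<lambda>i x y H. if H \<in> subgraphs ne P i then tq alg lm (rep (x H) + rep (y H)) else {}),
     cx_smult = (\<lambda>i r x H. if H \<in> subgraphs ne P i then tq alg lm (fsmult r (rep (x H))) else {}),
     cx_d = (\<lambda>i x H'. if H' \<in> subgraphs ne P (Suc i) then
        tq alg lm (\<Sum>e\<in>H'. fsmult ((- 1) ^ card {j \<in> H' - {e}. j < e})
            (cover_map lm rm hat nv src tgt (H' - {e}) e (rep (x (H' - {e})))))
        else {})\<rparr>"

definition chrom_cx where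
  "chrom_cx alg lm rm nv ne src tgt = graph_cx alg lm rm False nv ne src tgt (\<lambda>H. True)"

definition chrom_hat_cx where
  "chrom_hat_cx alg lm rm nv ne src tgt = graph_cx alg lm rm True nv ne src tgt (\<lambda>H. True)"

definition multipath_cx where
  "multipath_cx alg lm rm nv ne src tgt =
     graph_cx alg lm rm True nv ne src tgt (is_multipath nv src tgt)"

end

theory Submission
  imports Defs
begin

text \<open>For \<open>I\<^sub>n\<close> every spanning subgraph is a multipath and every edge is a bridge, so
  no covering map joins a component to itself: the multipath complex and both chromatic
  complexes coincide. For \<open>P\<^sub>n\<close> the only spanning subgraph that is not a multipath is
  the whole cycle, in degree \<open>n + 1\<close>. Its summand is \<open>M \<otimes> A\<^sup>\<otimes>\<^sup>0 \<cong> M\<close>, and every edge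
  into it closes the cycle, so the hatted differential into it vanishes and it splits off
  as \<open>M[n + 1]\<close>.\<close>

section \<open>Free modules and the tensor quotient\<close>

lemma lookup_fsmult: "Poly_Mapping.lookup (fsmult r f) k = r * Poly_Mapping.lookup f k"
  by (simp add: fsmult_def map.rep_eq when_def)

lemma fsmult_diff: "fsmult r (x - y) = fsmult r x - fsmult r y"
  by (rule poly_mapping_eqI) (simp add: lookup_fsmult lookup_minus algebra_simps)

lemma fsmult_zero [simp]: "fsmult r 0 = 0"
  by (rule poly_mapping_eqI) (simp add: lookup_fsmult)

lemma fsmult_minus_one: "fsmult (- 1) x = - x"
  by (rule poly_mapping_eqI) (simp add: lookup_fsmult)

lemma fsmult_gen: "fsmult c (gen m as) = Poly_Mapping.single (m, as) c"
  by (rule poly_mapping_eqI) (simp add: gen_def lookup_fsmult lookup_single when_def)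

lemma keys_fsmult: "Poly_Mapping.keys (fsmult r x) \<subseteq> Poly_Mapping.keys x"
  by (auto simp: in_keys_iff lookup_fsmult)

lemma sum_single_lookup:
  "(\<Sum>y\<in>Poly_Mapping.keys f. Poly_Mapping.single y (Poly_Mapping.lookup f y)) = f"
  by (rule poly_mapping_eqI) (simp add: lookup_sum lookup_single when_def in_keys_iff)

lemma tensor_N_zero: "0 \<in> tensor_N alg lm"
  unfolding tensor_N_def by (rule rspan_zero)

lemma tensor_N_add: "x \<in> tensor_N alg lm \<Longrightarrow> y \<in> tensor_N alg lm \<Longrightarrow> x + y \<in> tensor_N alg lm"
  unfolding tensor_N_def by (rule rspan_add)

lemma tensor_N_fsmult: "x \<in> tensor_N alg lm \<Longrightarrow> fsmult r x \<in> tensor_N alg lm"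
  unfolding tensor_N_def by (rule rspan_smult)

lemma tensor_N_uminus: "x \<in> tensor_N alg lm \<Longrightarrow> - x \<in> tensor_N alg lm"
  using tensor_N_fsmult[of x alg lm "- 1"] by (simp add: fsmult_minus_one)

lemma tensor_N_diff: "x \<in> tensor_N alg lm \<Longrightarrow> y \<in> tensor_N alg lm \<Longrightarrow> x - y \<in> tensor_N alg lm"
  using tensor_N_add[OF _ tensor_N_uminus] by (metis diff_conv_add_uminus)

lemma gen_add_in_tensor_N: "gen (m1 + m2) as - gen m1 as - gen m2 as \<in> tensor_N alg lm"
  unfolding tensor_N_def tensor_relations_def by (rule rspan_gen) blast

lemma gen_scalar_in_tensor_N: "gen (lm (alg r) m) as - fsmult r (gen m as) \<in> tensor_N alg lm"
  unfolding tensor_N_def tensor_relations_def by (rule rspan_gen) blast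

lemma gen_zero_in_tensor_N: "gen 0 as \<in> tensor_N alg lm"
  using tensor_N_uminus[OF gen_add_in_tensor_N[of 0 0 as alg lm]] by simp

lemma self_in_tq: "f \<in> tq alg lm f"
  unfolding tq_def using tensor_N_zero by force

lemma tq_subset: "f - g \<in> tensor_N alg lm \<Longrightarrow> tq alg lm f \<subseteq> tq alg lm g"
proof
  fix z assume fg: "f - g \<in> tensor_N alg lm" and "z \<in> tq alg lm f"
  then obtain x where x: "x \<in> tensor_N alg lm" "z = f + x" unfolding tq_def by auto
  then have "z = g + ((f - g) + x)" by simp
  then show "z \<in> tq alg lm g" unfolding tq_def using tensor_N_add[OF fg x(1)] by blast
qed

lemma tq_eq_iff: "tq alg lm f = tq alg lm g \<longleftrightarrow> f - g \<in> tensor_N alg lm"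
proof
  assume "tq alg lm f = tq alg lm g"
  then have "f \<in> tq alg lm g" using self_in_tq by metis
  then show "f - g \<in> tensor_N alg lm" unfolding tq_def by auto
next
  assume fg: "f - g \<in> tensor_N alg lm"
  then have "g - f \<in> tensor_N alg lm" using tensor_N_uminus by fastforce
  with fg show "tq alg lm f = tq alg lm g" by (intro equalityI tq_subset)
qed

lemma rep_tq: "rep (tq alg lm f) - f \<in> tensor_N alg lm"
proof -
  have "rep (tq alg lm f) \<in> tq alg lm f"
    unfolding rep_def using self_in_tq by (rule someI)
  then show ?thesis unfolding tq_def by auto
qed

lemma tq_rep_add: "tq alg lm (rep (tq alg lm f) + rep (tq alg lm g)) = tq alg lm (f + g)"
proof -
  have "(rep (tq alg lm f) + rep (tq alg lm g)) - (f + g)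
      = (rep (tq alg lm f) - f) + (rep (tq alg lm g) - g)" by simp
  then show ?thesis unfolding tq_eq_iff using tensor_N_add[OF rep_tq rep_tq] by metis
qed

lemma tq_rep_fsmult: "tq alg lm (fsmult r (rep (tq alg lm f))) = tq alg lm (fsmult r f)"
  unfolding tq_eq_iff fsmult_diff[symmetric] by (rule tensor_N_fsmult[OF rep_tq])

lemma tq_gen_zero: "tq alg lm (gen 0 as) = tq alg lm 0"
  unfolding tq_eq_iff using gen_zero_in_tensor_N by simp

lemma tq_gen_Nil_add: "tq alg lm (gen (m + m') []) = tq alg lm (gen m [] + gen m' [])"
  unfolding tq_eq_iff using gen_add_in_tensor_N[of m m' "[]" alg lm] by (simp add: algebra_simps)

lemma tq_gen_Nil_scalar: "tq alg lm (gen (lm (alg r) m) []) = tq alg lm (fsmult r (gen m []))"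
  unfolding tq_eq_iff by (rule gen_scalar_in_tensor_N)

lemma sum_single_Nil_in_tensor_N:
  assumes "finite S" "\<forall>y\<in>S. snd y = []"
  shows "(\<Sum>y\<in>S. Poly_Mapping.single y (c y)) - gen (\<Sum>y\<in>S. lm (alg (c y)) (fst y)) []
    \<in> tensor_N alg lm"
  using assms
proof (induction S rule: finite_induct)
  case empty
  then show ?case using tensor_N_uminus[OF gen_zero_in_tensor_N] by simp
next
  case (insert y S)
  define m where "m = lm (alg (c y)) (fst y)"
  define m' where "m' = (\<Sum>y\<in>S. lm (alg (c y)) (fst y))"
  have y: "y = (fst y, [])" using insert.prems by (cases y) simp
  have single: "Poly_Mapping.single y (c y) - gen m [] \<in> tensor_N alg lm"
    using tensor_N_uminus[OF gen_scalar_in_tensor_N[where alg = alg and lm = lm and r = "c y"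
          and m = "fst y" and as = "[]"]] y
    by (simp add: m_def fsmult_gen)
  have IH: "(\<Sum>y\<in>S. Poly_Mapping.single y (c y)) - gen m' [] \<in> tensor_N alg lm"
    using insert.IH insert.prems by (simp add: m'_def)
  have "(\<Sum>y\<in>insert y S. Poly_Mapping.single y (c y)) - gen (m + m') []
      = (Poly_Mapping.single y (c y) - gen m [])
        + ((\<Sum>y\<in>S. Poly_Mapping.single y (c y)) - gen m' [])
        - (gen (m + m') [] - gen m [] - gen m' [])"
    using insert.hyps by (simp add: algebra_simps)
  also have "\<dots> \<in> tensor_N alg lm"
    by (rule tensor_N_diff[OF tensor_N_add[OF single IH] gen_add_in_tensor_N])
  finally show ?case using insert.hyps by (simp add: m_def m'_def)
qed

lemma tensor_carrier_0: "tensor_carrier alg lm 0 = range (\<lambda>m. tq alg lm (gen m []))"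
proof
  show "tensor_carrier alg lm 0 \<subseteq> range (\<lambda>m. tq alg lm (gen m []))"
  proof
    fix X assume "X \<in> tensor_carrier alg lm 0"
    then obtain f where f: "\<forall>y\<in>Poly_Mapping.keys f. snd y = []" "X = tq alg lm f"
      unfolding tensor_carrier_def free_len_def by auto
    let ?m = "\<Sum>y\<in>Poly_Mapping.keys f. lm (alg (Poly_Mapping.lookup f y)) (fst y)"
    have "f - gen ?m [] \<in> tensor_N alg lm"
      using sum_single_Nil_in_tensor_N[OF finite_keys f(1),
          where c = "Poly_Mapping.lookup f" and alg = alg and lm = lm]
      by (simp add: sum_single_lookup)
    then show "X \<in> range (\<lambda>m. tq alg lm (gen m []))"
      unfolding f(2) tq_eq_iff[symmetric] by blast
  qed
  show "range (\<lambda>m. tq alg lm (gen m [])) \<subseteq> tensor_carrier alg lm 0"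
    unfolding tensor_carrier_def free_len_def gen_def by auto
qed

text \<open>\<open>proj_M\<close> realises \<open>M \<otimes> A\<^sup>\<otimes>\<^sup>0 \<cong> M\<close> on representatives; since it kills
  \<open>tensor_N\<close>, it separates the classes of the generators \<open>gen m []\<close>.\<close>

definition proj_M :: "('r::comm_ring_1 \<Rightarrow> 'a::ring_1) \<Rightarrow> ('a \<Rightarrow> 'm::ab_group_add \<Rightarrow> 'm)
    \<Rightarrow> ('m, 'a, 'r) free \<Rightarrow> 'm" where
  "proj_M alg lm f = (\<Sum>y\<in>Poly_Mapping.keys f.
     if snd y = [] then lm (alg (Poly_Mapping.lookup f y)) (fst y) else 0)"

context
  fixes alg :: "'r::comm_ring_1 \<Rightarrow> 'a::ring_1"
    and lm :: "'a \<Rightarrow> 'm::ab_group_add \<Rightarrow> 'm" and rm :: "'m \<Rightarrow> 'a \<Rightarrow> 'm"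
  assumes alg: "r_algebra alg" and bimod: "bimodule alg lm rm"
begin

lemma alg_add: "alg (r + s) = alg r + alg s"
  and alg_mult: "alg (r * s) = alg r * alg s"
  and alg_one: "alg 1 = 1"
  using alg unfolding r_algebra_def by blast+

lemma alg_zero: "alg 0 = 0"
  using alg_add[of 0 0] by simp

lemma lm_one: "lm 1 x = x"
  and lm_mult: "lm (a * b) x = lm a (lm b x)"
  and lm_add_left: "lm (a + b) x = lm a x + lm b x"
  and lm_add_right: "lm a (x + y) = lm a x + lm a y"
  using bimod unfolding bimodule_def by simp_all

lemma lm_zero_left: "lm 0 x = 0"
  using lm_add_left[of 0 0 x] by simp

lemma lm_zero_right: "lm a 0 = 0"
  using lm_add_right[of a 0 0] by simp

lemma lm_sum: "lm a (\<Sum>i\<in>S. f i) = (\<Sum>i\<in>S. lm a (f i))"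
  by (induction S rule: infinite_finite_induct) (simp_all add: lm_zero_right lm_add_right)

lemma proj_M_superset:
  assumes "finite S" "Poly_Mapping.keys f \<subseteq> S"
  shows "proj_M alg lm f =
    (\<Sum>y\<in>S. if snd y = [] then lm (alg (Poly_Mapping.lookup f y)) (fst y) else 0)"
  unfolding proj_M_def using assms
  by (intro sum.mono_neutral_left) (auto simp: in_keys_iff alg_zero lm_zero_left)

lemma proj_M_add: "proj_M alg lm (f + g) = proj_M alg lm f + proj_M alg lm g"
proof -
  let ?S = "Poly_Mapping.keys f \<union> Poly_Mapping.keys g"
  let ?t = "\<lambda>h y. if snd y = [] then lm (alg (Poly_Mapping.lookup h y)) (fst y) else 0"
  have "proj_M alg lm (f + g) = (\<Sum>y\<in>?S. ?t (f + g) y)"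
    by (rule proj_M_superset) (simp_all add: keys_add)
  also have "\<dots> = (\<Sum>y\<in>?S. ?t f y + ?t g y)"
    by (rule sum.cong) (simp_all add: lookup_add alg_add lm_add_left)
  also have "\<dots> = proj_M alg lm f + proj_M alg lm g"
    using proj_M_superset[of ?S f] proj_M_superset[of ?S g] by (simp add: sum.distrib)
  finally show ?thesis .
qed

lemma proj_M_diff: "proj_M alg lm (f - g) = proj_M alg lm f - proj_M alg lm g"
  using proj_M_add[of "f - g" g] by (simp add: algebra_simps)

lemma proj_M_fsmult: "proj_M alg lm (fsmult r f) = lm (alg r) (proj_M alg lm f)"
proof -
  have "proj_M alg lm (fsmult r f) = (\<Sum>y\<in>Poly_Mapping.keys f.
      if snd y = [] then lm (alg (Poly_Mapping.lookup (fsmult r f) y)) (fst y) else 0)"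
    by (rule proj_M_superset[OF finite_keys keys_fsmult])
  also have "\<dots> = (\<Sum>y\<in>Poly_Mapping.keys f. lm (alg r)
      (if snd y = [] then lm (alg (Poly_Mapping.lookup f y)) (fst y) else 0))"
    by (rule sum.cong) (simp_all add: lookup_fsmult alg_mult lm_mult lm_zero_right)
  also have "\<dots> = lm (alg r) (proj_M alg lm f)"
    by (simp add: proj_M_def lm_sum)
  finally show ?thesis .
qed

lemma proj_M_gen: "proj_M alg lm (gen m as) = (if as = [] then m else 0)"
  using proj_M_superset[of "{(m, as)}" "gen m as"]
  by (simp add: gen_def alg_one lm_one)

lemma proj_M_tensor_N: "f \<in> tensor_N alg lm \<Longrightarrow> proj_M alg lm f = 0"
  unfolding tensor_N_def
proof (induction rule: rspan.induct)
  case rspan_zero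
  show ?case by (simp add: proj_M_def)
next
  case (rspan_gen g)
  then show ?case
    unfolding tensor_relations_def
    by (auto simp: proj_M_diff proj_M_gen proj_M_fsmult lm_zero_right)
next
  case (rspan_add f g)
  then show ?case by (simp add: proj_M_add)
next
  case (rspan_smult f r)
  then show ?case by (simp add: proj_M_fsmult lm_zero_right)
qed

lemma tq_gen_Nil_inj: "tq alg lm (gen m []) = tq alg lm (gen m' []) \<Longrightarrow> m = m'"
  unfolding tq_eq_iff by (drule proj_M_tensor_N) (simp add: proj_M_diff proj_M_gen)

end

section \<open>Connectivity and components\<close>

lemma conn_refl: "conn src tgt H u u"
  by (simp add: conn_def)

lemma conn_sym: "conn src tgt H u v \<Longrightarrow> conn src tgt H v u"
proof -
  have "sym (\<Union>j\<in>H. {(src j, tgt j), (tgt j, src j)})"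
    by (auto simp: sym_def)
  then show "conn src tgt H u v \<Longrightarrow> conn src tgt H v u"
    unfolding conn_def by (meson sym_rtrancl symD)
qed

lemma conn_trans: "conn src tgt H u v \<Longrightarrow> conn src tgt H v w \<Longrightarrow> conn src tgt H u w"
  unfolding conn_def by (rule rtrancl_trans)

lemma conn_edge: "j \<in> H \<Longrightarrow> conn src tgt H (src j) (tgt j)"
  unfolding conn_def by blast

lemma conn_mono: "H \<subseteq> H' \<Longrightarrow> conn src tgt H u v \<Longrightarrow> conn src tgt H' u v"
  unfolding conn_def by (erule rtrancl_mono[THEN subsetD, rotated]) blast

lemma conn_chain:
  assumes "a \<le> b" and "\<And>q. a \<le> q \<Longrightarrow> q < b \<Longrightarrow> conn src tgt H (f q) (f (Suc q))"
  shows "conn src tgt H (f a) (f b)"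
  using assms(1)
proof (induction b rule: dec_induct)
  case base
  show ?case by (rule conn_refl)
next
  case (step q)
  show ?case by (rule conn_trans[OF step.IH assms(2)[OF step.hyps]])
qed

lemma conn_induct [consumes 1, case_names refl step]:
  assumes "conn src tgt H u v" and "P u"
    and "\<And>y z j. conn src tgt H u y \<Longrightarrow> P y \<Longrightarrow> j \<in> H \<Longrightarrow>
           (y, z) = (src j, tgt j) \<or> (y, z) = (tgt j, src j) \<Longrightarrow> P z"
  shows "P v"
  using assms(1) unfolding conn_def
proof (induction rule: rtrancl_induct)
  case base
  show ?case by (rule assms(2))
next
  case (step y z)
  then show ?case using assms(3) unfolding conn_def by blast
qed

lemma comp_conn: "conn src tgt H u v \<Longrightarrow> comp nv src tgt H u = comp nv src tgt H v"
  unfolding comp_def using conn_trans conn_sym by blast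

lemma mem_comp: "v \<le> nv \<Longrightarrow> v \<in> comp nv src tgt H v"
  unfolding comp_def using conn_refl by auto

lemma cmin_in_comp: "v \<le> nv \<Longrightarrow> cmin nv src tgt H v \<in> comp nv src tgt H v"
  unfolding cmin_def using mem_comp[of v nv src tgt H] by (intro Min_in) (auto simp: comp_def)

lemma cmin_eq_iff_conn:
  assumes "u \<le> nv" "v \<le> nv"
  shows "cmin nv src tgt H u = cmin nv src tgt H v \<longleftrightarrow> conn src tgt H u v"
proof
  assume "cmin nv src tgt H u = cmin nv src tgt H v"
  moreover have "conn src tgt H (cmin nv src tgt H u) u" "conn src tgt H (cmin nv src tgt H v) v"
    using cmin_in_comp[OF assms(1)] cmin_in_comp[OF assms(2)] by (simp_all add: comp_def)
  ultimately show "conn src tgt H u v" by (metis conn_sym conn_trans)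
qed (simp add: cmin_def comp_conn)

lemma cmin_cmin: "v \<le> nv \<Longrightarrow> cmin nv src tgt H (cmin nv src tgt H v) = cmin nv src tgt H v"
  using cmin_in_comp[of v nv] by (intro cmin_eq_iff_conn[THEN iffD2]) (auto simp: comp_def)

lemma crank_strict_mono:
  assumes "u \<le> nv" and "cmin nv src tgt H u < cmin nv src tgt H v"
  shows "crank nv src tgt H u < crank nv src tgt H v"
proof -
  have "cmin nv src tgt H u \<le> nv" using cmin_in_comp[OF assms(1)] by (simp add: comp_def)
  then have "{w \<in> {0..nv}. cmin nv src tgt H w = w \<and> w < cmin nv src tgt H u}
      \<subset> {w \<in> {0..nv}. cmin nv src tgt H w = w \<and> w < cmin nv src tgt H v}"
    using assms cmin_cmin[OF assms(1)] by auto
  then show ?thesis unfolding crank_def by (rule psubset_card_mono[rotated]) simp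
qed

lemma crank_eq_iff_conn:
  assumes "u \<le> nv" "v \<le> nv"
  shows "crank nv src tgt H u = crank nv src tgt H v \<longleftrightarrow> conn src tgt H u v"
proof
  assume "crank nv src tgt H u = crank nv src tgt H v"
  then have "cmin nv src tgt H u = cmin nv src tgt H v"
    using crank_strict_mono[OF assms(1)] crank_strict_mono[OF assms(2)]
    by (metis less_irrefl linorder_neqE_nat)
  then show "conn src tgt H u v" using cmin_eq_iff_conn[OF assms] by simp
qed (simp add: crank_def cmin_def comp_conn)

lemma kH_connected:
  assumes "\<And>u. u \<le> nv \<Longrightarrow> conn src tgt H u 0"
  shows "kH nv src tgt H = 0"
proof -
  have "cmin nv src tgt H w = 0" if "w \<le> nv" for w
  proof -
    have "0 \<in> comp nv src tgt H w" using assms[OF that] by (simp add: comp_def conn_sym)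
    moreover have "finite (comp nv src tgt H w)" by (simp add: comp_def)
    ultimately show ?thesis unfolding cmin_def using Min_le by fastforce
  qed
  then have "{w \<in> {0..nv}. cmin nv src tgt H w = w} = {0}" by auto
  then show ?thesis unfolding kH_def by simp
qed

lemma subgraphs_beyond:
  assumes "ne < i"
  shows "subgraphs ne P i = {}"
proof -
  have "card H \<noteq> i" if "H \<subseteq> {0..<ne}" for H :: "nat set"
    using card_mono[OF finite_atLeastLessThan that] assms by simp
  then show ?thesis unfolding subgraphs_def by blast
qed

lemma subgraph_card_eq_all: "H \<subseteq> {0..<ne} \<Longrightarrow> card H = ne \<Longrightarrow> H = {0..<ne}"
  using card_subset_eq[of "{0..<ne}" H] by simp

lemma subgraphs_all: "subgraphs ne (\<lambda>_. True) ne = {{0..<ne}}"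
proof -
  have "H \<in> subgraphs ne (\<lambda>_. True) ne \<longleftrightarrow> H = {0..<ne}" for H
  proof
    assume "H \<in> subgraphs ne (\<lambda>_. True) ne"
    then show "H = {0..<ne}" unfolding subgraphs_def using subgraph_card_eq_all by blast
  qed (simp add: subgraphs_def)
  then show ?thesis by blast
qed

section \<open>Multipaths from path labellings\<close>

locale path_labelling =
  fixes nv :: nat and src tgt :: "nat \<Rightarrow> nat" and H :: "nat set" and c :: "nat \<Rightarrow> nat"
  assumes bij_label: "bij_betw c {0..nv} {0..nv}"
    and edge_label: "\<And>j. j \<in> H \<Longrightarrow> src j \<le> nv \<and> tgt j \<le> nv \<and> c (tgt j) = Suc (c (src j))"
    and inj_src: "inj_on src H"
begin

definition vertex :: "nat \<Rightarrow> nat" where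
  "vertex = the_inv_into {0..nv} c"

lemma vertex_label: "x \<le> nv \<Longrightarrow> vertex (c x) = x"
  using bij_label unfolding vertex_def bij_betw_def by (simp add: the_inv_into_f_f)

lemma label_vertex: "q \<le> nv \<Longrightarrow> c (vertex q) = q"
  using bij_label unfolding vertex_def bij_betw_def by (simp add: f_the_inv_into_f)

lemma label_le: "x \<le> nv \<Longrightarrow> c x \<le> nv"
  using bij_label by (auto simp: bij_betw_def)

lemma vertex_le: "q \<le> nv \<Longrightarrow> vertex q \<le> nv"
  using bij_label the_inv_into_into[of c "{0..nv}" q "{0..nv}"]
  unfolding vertex_def bij_betw_def by simp

lemma inj_on_vertex: "inj_on vertex {0..nv}"
  by (rule inj_onI) (metis atLeastAtMost_iff label_vertex)

definition steps :: "nat set" where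
  "steps = (\<lambda>j. c (src j)) ` H"

lemma edge_vertices: "j \<in> H \<Longrightarrow> src j = vertex (c (src j)) \<and> tgt j = vertex (Suc (c (src j)))"
  using edge_label[of j] vertex_label[of "src j"] vertex_label[of "tgt j"] by simp

lemma steps_less: "q \<in> steps \<Longrightarrow> q < nv"
  unfolding steps_def using edge_label label_le by fastforce

lemma step_edge: "q \<in> steps \<Longrightarrow> \<exists>j\<in>H. src j = vertex q \<and> tgt j = vertex (Suc q)"
  unfolding steps_def using edge_vertices by blast

lemma conn_run:
  assumes "a \<le> b" "{a..<b} \<subseteq> steps"
  shows "conn src tgt H (vertex a) (vertex b)"
proof (rule conn_chain[OF assms(1)])
  fix q assume "a \<le> q" "q < b"
  then obtain j where j: "j \<in> H" "src j = vertex q" "tgt j = vertex (Suc q)"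
    using assms(2) step_edge by (meson atLeastLessThan_iff subsetD)
  show "conn src tgt H (vertex q) (vertex (Suc q))"
    using conn_edge[OF j(1), of src tgt] j by simp
qed

text \<open>The component of the vertex with label \<open>p\<close> consists of the labels of the maximal
  run of consecutive steps through \<open>p\<close>, from \<open>run_start p\<close> to \<open>run_end p\<close>.\<close>

definition run_start :: "nat \<Rightarrow> nat" where
  "run_start p = (LEAST a. {a..<p} \<subseteq> steps)"

definition run_end :: "nat \<Rightarrow> nat" where
  "run_end p = (LEAST b. p \<le> b \<and> b \<notin> steps)"

lemma run_start_le: "run_start p \<le> p"
  unfolding run_start_def by (rule Least_le) simp

lemma run_start_steps: "{run_start p..<p} \<subseteq> steps"
  unfolding run_start_def by (rule LeastI[of _ p]) simp

lemma run_start_minimal: "0 < run_start p \<Longrightarrow> run_start p - 1 \<notin> steps"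
proof
  assume "0 < run_start p" "run_start p - 1 \<in> steps"
  have "{run_start p - 1..<p} \<subseteq> insert (run_start p - 1) {run_start p..<p}"
    by auto
  with run_start_steps \<open>run_start p - 1 \<in> steps\<close> have "{run_start p - 1..<p} \<subseteq> steps"
    by blast
  then have "run_start p \<le> run_start p - 1"
    unfolding run_start_def by (rule Least_le)
  with \<open>0 < run_start p\<close> show False by simp
qed

lemma run_end_ge: "p \<le> nv \<Longrightarrow> p \<le> run_end p"
  and run_end_not_step: "p \<le> nv \<Longrightarrow> run_end p \<notin> steps"
  and run_end_le: "p \<le> nv \<Longrightarrow> run_end p \<le> nv"
  using steps_less LeastI[of "\<lambda>b. p \<le> b \<and> b \<notin> steps" nv]
    Least_le[of "\<lambda>b. p \<le> b \<and> b \<notin> steps" nv]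
  unfolding run_end_def by blast+

lemma run_end_steps: "{p..<run_end p} \<subseteq> steps"
proof
  fix q assume q: "q \<in> {p..<run_end p}"
  show "q \<in> steps"
  proof (rule ccontr)
    assume "q \<notin> steps"
    with q have "run_end p \<le> q" unfolding run_end_def by (intro Least_le) simp
    with q show False by simp
  qed
qed

lemma run_steps: "p \<le> nv \<Longrightarrow> {run_start p..<run_end p} \<subseteq> steps"
proof -
  have "{run_start p..<run_end p} \<subseteq> {run_start p..<p} \<union> {p..<run_end p}" by auto
  then show ?thesis using run_start_steps[of p] run_end_steps[of p] by blast
qed

lemma conn_in_run:
  assumes v: "v \<le> nv" and "conn src tgt H v u"
  shows "u \<le> nv \<and> c u \<in> {run_start (c v)..run_end (c v)}"
  using assms(2)
proof (induction rule: conn_induct)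
  case refl
  show ?case using v run_start_le run_end_ge[OF label_le[OF v]] by simp
next
  case (step y z j)
  define a b where "a = run_start (c v)" and "b = run_end (c v)"
  have y: "c y \<in> {a..b}" using step by (simp add: a_def b_def)
  have jH: "j \<in> H" and yz: "(y, z) = (src j, tgt j) \<or> (y, z) = (tgt j, src j)"
    using step by blast+
  have j: "src j \<le> nv" "tgt j \<le> nv" "c (tgt j) = Suc (c (src j))"
    using edge_label[OF jH] by auto
  have "c (src j) \<in> steps" unfolding steps_def using jH by blast
  from yz show ?case
  proof
    assume "(y, z) = (src j, tgt j)"
    moreover have "c (src j) \<noteq> b"
      using \<open>c (src j) \<in> steps\<close> run_end_not_step[OF label_le[OF v]] by (auto simp: b_def)
    ultimately show ?case using y j by (auto simp: a_def b_def)
  next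
    assume yz: "(y, z) = (tgt j, src j)"
    have "a = 0 \<or> a - 1 \<notin> steps"
      unfolding a_def using run_start_minimal[of "c v"] by blast
    then have "c (src j) \<noteq> a - 1 \<or> a = 0" using \<open>c (src j) \<in> steps\<close> by auto
    then show ?case using yz y j by (auto simp: a_def b_def)
  qed
qed

lemma comp_run:
  assumes v: "v \<le> nv"
  shows "comp nv src tgt H v = vertex ` {run_start (c v)..run_end (c v)}"
proof
  define a b where "a = run_start (c v)" and "b = run_end (c v)"
  have p: "c v \<le> nv" using label_le[OF v] .
  have ab: "a \<le> c v" "c v \<le> b" "b \<le> nv"
    unfolding a_def b_def using run_start_le run_end_ge[OF p] run_end_le[OF p] by auto
  have run: "{a..<b} \<subseteq> steps" unfolding a_def b_def using run_steps[OF p] .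
  have "{a..<c v} \<subseteq> steps" using run ab(2) by auto
  then have av: "conn src tgt H (vertex a) v"
    using conn_run[of a "c v"] ab(1) vertex_label[OF v] by simp
  show "vertex ` {a..b} \<subseteq> comp nv src tgt H v"
  proof
    fix u assume "u \<in> vertex ` {a..b}"
    then obtain q where q: "q \<in> {a..b}" "u = vertex q" by blast
    moreover have "{a..<q} \<subseteq> steps" using run q(1) by auto
    ultimately have "conn src tgt H (vertex a) u" using conn_run[of a q] by simp
    then have "conn src tgt H u v" using av conn_sym conn_trans by metis
    moreover have "u \<le> nv" using q ab vertex_le by simp
    ultimately show "u \<in> comp nv src tgt H v" by (simp add: comp_def)
  qed
  show "comp nv src tgt H v \<subseteq> vertex ` {a..b}"
  proof
    fix u assume "u \<in> comp nv src tgt H v"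
    then have "u \<le> nv" "c u \<in> {a..b}"
      using conn_in_run[OF v] conn_sym by (auto simp: comp_def a_def b_def)
    then show "u \<in> vertex ` {a..b}" using imageI[of "c u" "{a..b}" vertex] vertex_label by simp
  qed
qed

definition run_vertices :: "nat \<Rightarrow> nat list" where
  "run_vertices p = map vertex [run_start p..<Suc (run_end p)]"

lemma nth_run_vertices:
  "i < length (run_vertices p) \<Longrightarrow> run_vertices p ! i = vertex (run_start p + i)"
  unfolding run_vertices_def by (simp del: upt_Suc)

lemma length_run_vertices: "p \<le> nv \<Longrightarrow> length (run_vertices p) = Suc (run_end p) - run_start p"
  unfolding run_vertices_def using run_start_le[of p] run_end_ge[of p] by simp

lemma distinct_run_vertices: "p \<le> nv \<Longrightarrow> distinct (run_vertices p)"
proof -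
  assume "p \<le> nv"
  then have "{run_start p..<Suc (run_end p)} \<subseteq> {0..nv}" using run_end_le[of p] by auto
  then have "inj_on vertex {run_start p..<Suc (run_end p)}"
    by (rule inj_on_subset[OF inj_on_vertex])
  then show ?thesis by (simp add: run_vertices_def distinct_map del: upt_Suc)
qed

lemma set_run_vertices: "v \<le> nv \<Longrightarrow> set (run_vertices (c v)) = comp nv src tgt H v"
  by (simp add: run_vertices_def comp_run atLeastLessThanSuc_atLeastAtMost del: upt_Suc)

lemma run_vertices_edge:
  assumes "p \<le> nv" "Suc i < length (run_vertices p)"
  shows "\<exists>j\<in>H. src j = run_vertices p ! i \<and> tgt j = run_vertices p ! Suc i"
proof -
  have "run_start p + i < run_end p" using assms length_run_vertices by simp
  then have "run_start p + i \<in> steps" using run_steps[OF assms(1)] by auto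
  then show ?thesis using step_edge assms(2) nth_run_vertices by simp
qed

lemma edge_in_run_vertices:
  assumes v: "v \<le> nv" and j: "j \<in> H" "src j \<in> comp nv src tgt H v"
  shows "\<exists>i. Suc i < length (run_vertices (c v)) \<and>
    src j = run_vertices (c v) ! i \<and> tgt j = run_vertices (c v) ! Suc i"
proof -
  define a b where "a = run_start (c v)" and "b = run_end (c v)"
  have p: "c v \<le> nv" using label_le[OF v] .
  obtain q where q: "q \<in> {a..b}" "src j = vertex q"
    using j(2) comp_run[OF v] by (auto simp: a_def b_def)
  have "c (src j) = q" using q run_end_le[OF p] label_vertex by (simp add: b_def)
  then have "q \<in> steps" unfolding steps_def using j(1) by blast
  then have "q < b" using q run_end_not_step[OF p] by (cases "q = b") (auto simp: b_def)
  have "tgt j = vertex (Suc q)" using edge_vertices[OF j(1)] \<open>c (src j) = q\<close> by simp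
  define i where "i = q - a"
  have i: "Suc i < length (run_vertices (c v))"
    using q \<open>q < b\<close> length_run_vertices[OF p] by (simp add: i_def a_def b_def)
  have "run_vertices (c v) ! i = vertex q" "run_vertices (c v) ! Suc i = vertex (Suc q)"
    using nth_run_vertices[OF i] nth_run_vertices[OF Suc_lessD[OF i]] q
    by (simp_all add: i_def a_def)
  then show ?thesis using i q(2) \<open>tgt j = vertex (Suc q)\<close> by auto
qed

lemma is_multipath: "is_multipath nv src tgt H"
  unfolding is_multipath_def
proof
  fix v assume "v \<in> {0..nv}"
  then have v: "v \<le> nv" by simp
  then have p: "c v \<le> nv" by (rule label_le)
  show "\<exists>vs. distinct vs \<and> set vs = comp nv src tgt H v \<and>
      (\<forall>i. Suc i < length vs \<longrightarrow> (\<exists>j\<in>H. src j = vs ! i \<and> tgt j = vs ! Suc i)) \<and>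
      (\<forall>j\<in>H. src j \<in> comp nv src tgt H v \<longrightarrow>
          (\<exists>i. Suc i < length vs \<and> src j = vs ! i \<and> tgt j = vs ! Suc i)) \<and>
      (\<forall>j1\<in>H. \<forall>j2\<in>H. src j1 = src j2 \<and> tgt j1 = tgt j2 \<longrightarrow> j1 = j2)"
  proof (intro exI conjI)
    show "distinct (run_vertices (c v))" by (rule distinct_run_vertices[OF p])
    show "set (run_vertices (c v)) = comp nv src tgt H v" by (rule set_run_vertices[OF v])
    show "\<forall>i. Suc i < length (run_vertices (c v)) \<longrightarrow>
        (\<exists>j\<in>H. src j = run_vertices (c v) ! i \<and> tgt j = run_vertices (c v) ! Suc i)"
      using run_vertices_edge[OF p] by blast
    show "\<forall>j\<in>H. src j \<in> comp nv src tgt H v \<longrightarrow> (\<exists>i. Suc i < length (run_vertices (c v)) \<and>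
        src j = run_vertices (c v) ! i \<and> tgt j = run_vertices (c v) ! Suc i)"
      using edge_in_run_vertices[OF v] by blast
    show "\<forall>j1\<in>H. \<forall>j2\<in>H. src j1 = src j2 \<and> tgt j1 = tgt j2 \<longrightarrow> j1 = j2"
      using inj_src by (meson inj_onD)
  qed
qed

end

section \<open>The linear graph \<open>I\<^sub>n\<close> and the polygon \<open>P\<^sub>n\<close>\<close>

lemma I_multipath: "H \<subseteq> {0..<n} \<Longrightarrow> is_multipath n I_src I_tgt H"
proof -
  assume "H \<subseteq> {0..<n}"
  then interpret path_labelling n I_src I_tgt H id
    by unfold_locales (auto simp: I_src_def I_tgt_def inj_on_def)
  show ?thesis by (rule is_multipath)
qed

lemma I_not_conn: "e \<notin> H \<Longrightarrow> \<not> conn I_src I_tgt H e (Suc e)"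
proof
  assume e: "e \<notin> H" and "conn I_src I_tgt H e (Suc e)"
  from this(2) have "Suc e \<le> e"
  proof (induction rule: conn_induct[where P = "\<lambda>u. u \<le> e"])
    case (step y z j)
    then have "j \<noteq> e" using e by auto
    with step show ?case by (auto simp: I_src_def I_tgt_def)
  qed simp
  then show False by simp
qed

lemma P_tgt_eq: "j \<le> n \<Longrightarrow> P_tgt n j = (if j < n then Suc j else 0)"
  by (auto simp: P_tgt_def)

text \<open>Without the edge \<open>k\<close> the cycle is the path \<open>k + 1 \<rightarrow> \<dots> \<rightarrow> n \<rightarrow> 0 \<rightarrow> \<dots> \<rightarrow> k\<close>;
  the labelling below numbers its vertices in this order.\<close>

lemma P_multipath:
  assumes H: "H \<subseteq> {0..<Suc n}" and k: "k \<le> n" "k \<notin> H"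
  shows "is_multipath n (P_src n) (P_tgt n) H"
proof -
  define c where "c v = (if k < v then v - Suc k else v + n - k)" for v
  have "inj_on c {0..n}" using k by (auto simp: c_def inj_on_def split: if_splits)
  moreover have "c ` {0..n} = {0..n}"
  proof
    show "c ` {0..n} \<subseteq> {0..n}" using k by (auto simp: c_def)
    show "{0..n} \<subseteq> c ` {0..n}"
    proof
      fix w assume w: "w \<in> {0..n}"
      show "w \<in> c ` {0..n}"
      proof (cases "w < n - k")
        case True
        then show ?thesis using w k by (intro image_eqI[where x = "w + Suc k"]) (auto simp: c_def)
      next
        case False
        then show ?thesis using w k by (intro image_eqI[where x = "w + k - n"]) (auto simp: c_def)
      qed
    qed
  qed
  ultimately have "bij_betw c {0..n} {0..n}" by (simp add: bij_betw_def)
  moreover have "P_src n j \<le> n \<and> P_tgt n j \<le> n \<and> c (P_tgt n j) = Suc (c (P_src n j))"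
    if "j \<in> H" for j
  proof -
    have "j \<le> n" "j \<noteq> k" using that H k by auto
    then show ?thesis using k(1) by (auto simp: c_def P_src_def P_tgt_eq)
  qed
  moreover have "inj_on (P_src n) H" by (simp add: P_src_def inj_on_def)
  ultimately interpret path_labelling n "P_src n" "P_tgt n" H c
    by unfold_locales blast+
  show ?thesis by (rule is_multipath)
qed

lemma P_edge_conn: "j \<in> H \<Longrightarrow> j \<le> n \<Longrightarrow> conn (P_src n) (P_tgt n) H j (if j < n then Suc j else 0)"
  using conn_edge[of j H "P_src n" "P_tgt n"] by (simp add: P_src_def P_tgt_eq)

lemma P_conn_zero:
  assumes e: "e \<le> n" and H: "{0..<Suc n} - {e} \<subseteq> H" and v: "v \<le> n"
  shows "conn (P_src n) (P_tgt n) H v 0"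
proof -
  have step: "conn (P_src n) (P_tgt n) H q (Suc q)" if "q < n" "q \<noteq> e" for q
  proof -
    have "q \<in> {0..<Suc n} - {e}" using that by simp
    then have "q \<in> H" using H by blast
    then show ?thesis using P_edge_conn[of q H n] that by simp
  qed
  show ?thesis
  proof (cases "v \<le> e")
    case True
    have "conn (P_src n) (P_tgt n) H 0 v"
      using conn_chain[of 0 v _ _ H id] step True e by simp
    then show ?thesis by (rule conn_sym)
  next
    case False
    have "conn (P_src n) (P_tgt n) H v n"
      using conn_chain[of v n _ _ H id] step False v by simp
    moreover have "conn (P_src n) (P_tgt n) H n 0"
      using P_edge_conn[of n H n] False v H by auto
    ultimately show ?thesis by (rule conn_trans)
  qed
qed

lemma P_conn:
  assumes "e \<le> n" "{0..<Suc n} - {e} \<subseteq> H" "u \<le> n" "v \<le> n"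
  shows "conn (P_src n) (P_tgt n) H u v"
  using conn_trans[OF P_conn_zero[OF assms(1,2,3)] conn_sym[OF P_conn_zero[OF assms(1,2,4)]]] .

lemma P_cycle_not_multipath: "\<not> is_multipath n (P_src n) (P_tgt n) {0..<Suc n}"
proof
  assume mp: "is_multipath n (P_src n) (P_tgt n) {0..<Suc n}"
  have "0 \<in> {0..n}" by simp
  obtain vs where dist: "distinct vs"
    and set: "set vs = comp n (P_src n) (P_tgt n) {0..<Suc n} 0"
    and srcs: "\<forall>j\<in>{0..<Suc n}. P_src n j \<in> comp n (P_src n) (P_tgt n) {0..<Suc n} 0 \<longrightarrow>
      (\<exists>i. Suc i < length vs \<and> P_src n j = vs ! i \<and> P_tgt n j = vs ! Suc i)"
    using bspec[OF mp[unfolded is_multipath_def] \<open>0 \<in> {0..n}\<close>] by (elim exE conjE) simp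
  have comp: "comp n (P_src n) (P_tgt n) {0..<Suc n} 0 = {0..n}"
    unfolding comp_def using P_conn[of 0 n "{0..<Suc n}"] by auto
  then have len: "length vs = Suc n" using distinct_card[OF dist] set by simp
  \<comment> \<open>every vertex is the source of an edge, so it appears in \<open>vs\<close> before the last position\<close>
  have "{0..n} \<subseteq> (!) vs ` {..<n}"
  proof
    fix j assume "j \<in> {0..n}"
    then have "\<exists>i. Suc i < length vs \<and> P_src n j = vs ! i \<and> P_tgt n j = vs ! Suc i"
      using srcs comp by (simp add: P_src_def)
    then obtain i where "Suc i < length vs" "j = vs ! i" by (auto simp: P_src_def)
    then show "j \<in> (!) vs ` {..<n}" using len by auto
  qed
  then have "card {0..n} \<le> card ((!) vs ` {..<n})" by (intro card_mono) auto
  also have "\<dots> \<le> n" using card_image_le[of "{..<n}" "(!) vs"] by simp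
  finally show False by simp
qed

lemma subgraphs_I_multipath: "subgraphs n (is_multipath n I_src I_tgt) i = subgraphs n (\<lambda>_. True) i"
  unfolding subgraphs_def using I_multipath by blast

lemma subgraphs_P_multipath:
  assumes "i \<noteq> Suc n"
  shows "subgraphs (Suc n) (is_multipath n (P_src n) (P_tgt n)) i = subgraphs (Suc n) (\<lambda>_. True) i"
proof -
  have "is_multipath n (P_src n) (P_tgt n) H" if "H \<subseteq> {0..<Suc n}" "card H = i" for H
  proof -
    have "H \<noteq> {0..<Suc n}" using that assms by auto
    then have "\<not> {0..<Suc n} \<subseteq> H" using that(1) by blast
    then obtain k where "k \<in> {0..<Suc n}" "k \<notin> H" by blast
    then show ?thesis using P_multipath[OF that(1), of k] by simp
  qed
  then show ?thesis unfolding subgraphs_def by auto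
qed

lemma subgraphs_P_multipath_top:
  "subgraphs (Suc n) (is_multipath n (P_src n) (P_tgt n)) (Suc n) = {}"
  unfolding subgraphs_def using P_cycle_not_multipath[of n] subgraph_card_eq_all by blast

section \<open>Chromatic-type complexes\<close>

lemma cx_iso_refl: "cx_iso C C"
  unfolding cx_iso_def by (rule exI[of _ "\<lambda>i x. x"]) (simp add: bij_betw_def)

lemma graph_cx_cong:
  assumes "\<And>i. subgraphs ne P i = subgraphs ne Q i"
  shows "graph_cx alg lm rm hat nv ne src tgt P = graph_cx alg lm rm hat nv ne src tgt Q"
  using assms by (simp add: graph_cx_def)

lemma graph_cx_carrier_no_subgraphs:
  "subgraphs ne P i = {} \<Longrightarrow> cx_carrier (graph_cx alg lm rm hat nv ne src tgt P) i = {\<lambda>_. {}}"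
  by (auto simp: graph_cx_def)

lemma graph_cx_d_no_subgraphs:
  "subgraphs ne P (Suc i) = {} \<Longrightarrow> cx_d (graph_cx alg lm rm hat nv ne src tgt P) i x = (\<lambda>_. {})"
  by (simp add: graph_cx_def)

lemma cover_map_hat_irrelevant:
  "crank nv src tgt H (src e) \<noteq> crank nv src tgt H (tgt e) \<Longrightarrow>
    cover_map lm rm hat nv src tgt H e = cover_map lm rm hat' nv src tgt H e"
  by (simp add: cover_map_def Let_def fun_eq_iff)

lemma cover_map_hat_loop:
  "crank nv src tgt H (src e) = crank nv src tgt H (tgt e) \<Longrightarrow>
    cover_map lm rm True nv src tgt H e f = 0"
  by (simp add: cover_map_def Let_def)

lemma chrom_hat_cx_eq_chrom_cx:
  assumes "\<And>e. e < ne \<Longrightarrow> src e \<le> nv \<and> tgt e \<le> nv \<and> \<not> conn src tgt ({0..<ne} - {e}) (src e) (tgt e)"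
  shows "chrom_hat_cx alg lm rm nv ne src tgt = chrom_cx alg lm rm nv ne src tgt"
proof -
  have cover: "cover_map lm rm True nv src tgt (H - {e}) e
      = cover_map lm rm False nv src tgt (H - {e}) e"
    if "H \<subseteq> {0..<ne}" "e \<in> H" for H e
  proof (rule cover_map_hat_irrelevant)
    have e: "e < ne" using that by auto
    then have "\<not> conn src tgt (H - {e}) (src e) (tgt e)"
      using assms conn_mono[of "H - {e}" "{0..<ne} - {e}"] that(1) by blast
    then show "crank nv src tgt (H - {e}) (src e) \<noteq> crank nv src tgt (H - {e}) (tgt e)"
      using crank_eq_iff_conn assms[OF e] by blast
  qed
  show ?thesis
    unfolding chrom_hat_cx_def chrom_cx_def graph_cx_def
    by (simp add: subgraphs_def cover cong: if_cong sum.cong)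
qed

definition single_summand :: "nat set \<Rightarrow> 'x set \<Rightarrow> nat set \<Rightarrow> 'x set" where
  "single_summand H0 X = (\<lambda>H. if H = H0 then X else {})"

lemma graph_cx_d_into_single:
  assumes "subgraphs ne P (Suc i) = {H0}"
    and "\<And>e. e \<in> H0 \<Longrightarrow> crank nv src tgt (H0 - {e}) (src e) = crank nv src tgt (H0 - {e}) (tgt e)"
  shows "cx_d (graph_cx alg lm rm True nv ne src tgt P) i x = single_summand H0 (tq alg lm 0)"
  using assms
  by (simp add: graph_cx_def single_summand_def cover_map_hat_loop cong: if_cong sum.cong)

lemma single_summand_inj: "single_summand H0 X = single_summand H0 Y \<Longrightarrow> X = Y"
  unfolding single_summand_def by (drule fun_cong[of _ _ H0]) simp

lemma graph_cx_carrier_single: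
  assumes "subgraphs ne P i = {H0}"
  shows "cx_carrier (graph_cx alg lm rm hat nv ne src tgt P) i
    = single_summand H0 ` tensor_carrier alg lm (kH nv src tgt H0)"
proof (intro equalityI subsetI)
  fix x assume "x \<in> cx_carrier (graph_cx alg lm rm hat nv ne src tgt P) i"
  then have x: "\<forall>H. (H = H0 \<longrightarrow> x H \<in> tensor_carrier alg lm (kH nv src tgt H0)) \<and>
      (H \<noteq> H0 \<longrightarrow> x H = {})"
    using assms by (simp add: graph_cx_def)
  then have "x = single_summand H0 (x H0)" by (auto simp: single_summand_def fun_eq_iff)
  then show "x \<in> single_summand H0 ` tensor_carrier alg lm (kH nv src tgt H0)"
    using x by (intro image_eqI[of x _ "x H0"]) simp_all
next
  fix x assume "x \<in> single_summand H0 ` tensor_carrier alg lm (kH nv src tgt H0)"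
  then obtain X where "X \<in> tensor_carrier alg lm (kH nv src tgt H0)" "x = single_summand H0 X"
    by blast
  then show "x \<in> cx_carrier (graph_cx alg lm rm hat nv ne src tgt P) i"
    using assms by (simp add: graph_cx_def single_summand_def)
qed

lemma graph_cx_add_single:
  assumes "subgraphs ne P i = {H0}"
  shows "cx_add (graph_cx alg lm rm hat nv ne src tgt P) i
      (single_summand H0 (tq alg lm (gen m []))) (single_summand H0 (tq alg lm (gen m' [])))
    = single_summand H0 (tq alg lm (gen (m + m') []))"
  using assms by (simp add: graph_cx_def single_summand_def tq_rep_add tq_gen_Nil_add cong: if_cong)

lemma graph_cx_smult_single:
  assumes "subgraphs ne P i = {H0}"
  shows "cx_smult (graph_cx alg lm rm hat nv ne src tgt P) i r
      (single_summand H0 (tq alg lm (gen m [])))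
    = single_summand H0 (tq alg lm (gen (lm (alg r) m) []))"
  using assms
  by (simp add: graph_cx_def single_summand_def tq_rep_fsmult tq_gen_Nil_scalar cong: if_cong)

lemma bij_betw_single_summand_degree0:
  assumes "r_algebra alg" "bimodule alg lm rm"
    and "subgraphs ne P i = {H0}" "kH nv src tgt H0 = 0"
  shows "bij_betw (\<lambda>m. single_summand H0 (tq alg lm (gen m []))) UNIV
    (cx_carrier (graph_cx alg lm rm hat nv ne src tgt P) i)"
proof (rule bij_betw_imageI)
  show "inj_on (\<lambda>m. single_summand H0 (tq alg lm (gen m []))) UNIV"
    by (rule inj_onI) (rule tq_gen_Nil_inj[OF assms(1,2) single_summand_inj])
  show "range (\<lambda>m. single_summand H0 (tq alg lm (gen m []))) =
      cx_carrier (graph_cx alg lm rm hat nv ne src tgt P) i"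
    unfolding graph_cx_carrier_single[OF assms(3)] assms(4) tensor_carrier_0 image_image ..
qed

lemma cx_iso_dsum_shifted_M:
  fixes C D :: "('r::comm_ring_1, 'x) cochain_cx"
    and alg :: "'r \<Rightarrow> 'a::ring_1" and lm :: "'a \<Rightarrow> 'm::ab_group_add \<Rightarrow> 'm" and g :: "'m \<Rightarrow> 'x"
  assumes agree: "\<And>i. i \<noteq> Suc k \<Longrightarrow> cx_carrier C i = cx_carrier D i \<and>
      cx_add C i = cx_add D i \<and> cx_smult C i = cx_smult D i"
    and d_agree: "\<And>i. i \<noteq> k \<Longrightarrow> i \<noteq> Suc k \<Longrightarrow> cx_d C i = cx_d D i"
    and C_top: "cx_carrier C (Suc k) = {z}"
    and d_into: "\<And>x. x \<in> cx_carrier D k \<Longrightarrow> cx_d D k x = g 0"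
    and d_out: "\<And>y. y \<in> cx_carrier D (Suc k) \<Longrightarrow> cx_d D (Suc k) y = cx_d C (Suc k) z"
    and g_bij: "bij_betw g UNIV (cx_carrier D (Suc k))"
    and g_add: "\<And>m m'. g (m + m') = cx_add D (Suc k) (g m) (g m')"
    and g_smult: "\<And>r m. g (lm (alg r) m) = cx_smult D (Suc k) r (g m)"
  shows "cx_iso (cx_dsum C (shifted_M alg lm (Suc k))) D"
proof -
  let ?S = "cx_dsum C (shifted_M alg lm (Suc k))"
  define f where "f i p = (if i = Suc k then g (snd p) else fst p)" for i and p :: "'x \<times> 'm"
  have carrier_top: "cx_carrier ?S (Suc k) = {z} \<times> UNIV"
    using C_top by (simp add: cx_dsum_def shifted_M_def)
  have carrier: "cx_carrier ?S i = cx_carrier D i \<times> {0}" if "i \<noteq> Suc k" for i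
    using agree[OF that] that by (simp add: cx_dsum_def shifted_M_def)
  have g_in: "g m \<in> cx_carrier D (Suc k)" for m
    using g_bij by (auto simp: bij_betw_def)
  show ?thesis
    unfolding cx_iso_def
  proof (intro exI[of _ f] allI conjI ballI)
    fix i
    show "bij_betw (f i) (cx_carrier ?S i) (cx_carrier D i)"
    proof (cases "i = Suc k")
      case True
      have "bij_betw snd ({z} \<times> (UNIV :: 'm set)) UNIV"
        by (auto simp: bij_betw_def inj_on_def)
      moreover have "f i = g \<circ> snd" using True by (simp add: f_def fun_eq_iff)
      ultimately show ?thesis using bij_betw_trans[OF _ g_bij] True carrier_top by simp
    next
      case False
      have "bij_betw fst (cx_carrier D i \<times> {0 :: 'm}) (cx_carrier D i)"
        by (auto simp: bij_betw_def inj_on_def)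
      moreover have "f i = fst" using False by (simp add: f_def fun_eq_iff)
      ultimately show ?thesis using False carrier by simp
    qed
    fix x y
    assume x: "x \<in> cx_carrier ?S i"
    show "f i (cx_smult ?S i r x) = cx_smult D i r (f i x)" for r
      using agree[of i] g_smult by (simp add: f_def cx_dsum_def shifted_M_def)
    show "f (Suc i) (cx_d ?S i x) = cx_d D i (f i x)"
    proof -
      consider "i = k" | "i = Suc k" | "i \<noteq> k" "i \<noteq> Suc k" by blast
      then show ?thesis
      proof cases
        case 1
        then have "fst x \<in> cx_carrier D k" using x carrier[of k] by auto
        then show ?thesis using 1 d_into by (simp add: f_def cx_dsum_def shifted_M_def)
      next
        case 2
        then show ?thesis using x carrier_top d_out[OF g_in] by (auto simp: f_def cx_dsum_def)
      qed (simp_all add: f_def cx_dsum_def d_agree)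
    qed
    assume "y \<in> cx_carrier ?S i"
    then show "f i (cx_add ?S i x y) = cx_add D i (f i x) (f i y)"
      using agree[of i] g_add by (simp add: f_def cx_dsum_def shifted_M_def)
  qed
qed

lemma I_multipath_cx_eq_chrom_hat_cx:
  "multipath_cx alg lm rm n n I_src I_tgt = chrom_hat_cx alg lm rm n n I_src I_tgt"
  unfolding multipath_cx_def chrom_hat_cx_def by (rule graph_cx_cong[OF subgraphs_I_multipath])

lemma I_chrom_hat_cx_eq_chrom_cx:
  "chrom_hat_cx alg lm rm n n I_src I_tgt = chrom_cx alg lm rm n n I_src I_tgt"
  by (rule chrom_hat_cx_eq_chrom_cx) (simp add: I_src_def I_tgt_def I_not_conn)

lemma kH_P_cycle: "kH n (P_src n) (P_tgt n) {0..<Suc n} = 0"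
  by (rule kH_connected) (rule P_conn[of 0]; simp)

lemma crank_P_cycle_minus_edge:
  assumes "e \<in> {0..<Suc n}"
  shows "crank n (P_src n) (P_tgt n) ({0..<Suc n} - {e}) (P_src n e)
    = crank n (P_src n) (P_tgt n) ({0..<Suc n} - {e}) (P_tgt n e)"
proof -
  have "P_src n e \<le> n" "P_tgt n e \<le> n" using assms by (auto simp: P_src_def P_tgt_eq)
  then show ?thesis using assms by (simp add: crank_eq_iff_conn P_conn[of e])
qed

lemma P_multipath_cx_dsum_iso:
  assumes "r_algebra alg" "bimodule alg lm rm"
  shows "cx_iso
    (cx_dsum (multipath_cx alg lm rm n (Suc n) (P_src n) (P_tgt n)) (shifted_M alg lm (Suc n)))
    (chrom_hat_cx alg lm rm n (Suc n) (P_src n) (P_tgt n))"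
  unfolding multipath_cx_def chrom_hat_cx_def
  apply (rule cx_iso_dsum_shifted_M[where z = "\<lambda>_. {}"
        and g = "\<lambda>m. single_summand {0..<Suc n} (tq alg lm (gen m []))"])
  subgoal
    by (simp add: graph_cx_def subgraphs_P_multipath)
  subgoal
    by (simp add: graph_cx_def subgraphs_P_multipath)
  subgoal
    by (rule graph_cx_carrier_no_subgraphs[OF subgraphs_P_multipath_top])
  subgoal
    using graph_cx_d_into_single[OF subgraphs_all crank_P_cycle_minus_edge]
    by (simp add: tq_gen_zero)
  subgoal
    by (simp add: graph_cx_d_no_subgraphs subgraphs_beyond)
  subgoal
    by (rule bij_betw_single_summand_degree0[OF assms subgraphs_all kH_P_cycle])
  subgoal
    by (rule graph_cx_add_single[OF subgraphs_all, symmetric])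
  subgoal
    by (rule graph_cx_smult_single[OF subgraphs_all, symmetric])
  done

theorem theorem6p4:
  fixes alg :: "'r::comm_ring_1 \<Rightarrow> 'a::ring_1"
    and lm :: "'a \<Rightarrow> 'm::ab_group_add \<Rightarrow> 'm" and rm :: "'m \<Rightarrow> 'a \<Rightarrow> 'm"
    and n :: nat
  assumes "r_algebra alg" and "bimodule alg lm rm"
  shows "cx_iso (multipath_cx alg lm rm n n I_src I_tgt) (chrom_hat_cx alg lm rm n n I_src I_tgt)
       \<and> cx_iso (chrom_hat_cx alg lm rm n n I_src I_tgt) (chrom_cx alg lm rm n n I_src I_tgt)
       \<and> cx_iso (cx_dsum (multipath_cx alg lm rm n (Suc n) (P_src n) (P_tgt n))
                         (shifted_M alg lm (Suc n)))
                (chrom_hat_cx alg lm rm n (Suc n) (P_src n) (P_tgt n))"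
  by (intro conjI)
    (simp only: I_multipath_cx_eq_chrom_hat_cx cx_iso_refl,
     simp only: I_chrom_hat_cx_eq_chrom_cx cx_iso_refl,
     rule P_multipath_cx_dsum_iso[OF assms])

end
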